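(* Let $K\in\mathbb{N}_{\ge1}$ and $\delta>0$. There exists a ReLU FNN function $f^{(dsc)}_{FF}:\mathbb{R}\to\mathbb{R}$ with width $K$, depth $3$ and weight bound $1/\delta$ such that for any $k\in\{0,1,\dots,K-1\}$ and $x\in[k/K,(k+1)/K]$, $$f^{(dsc)}_{FF}(x)=\begin{cases}\dfrac kK,& x\in\big[\frac kK,\frac{k+1-\delta}{K}\big),\\[2mm] \dfrac{k+1}{K}-\dfrac{k+1-Kx}{K\delta},& x\in\big[\frac{k+1-\delta}K,\frac{k+1}K\big].\end{cases}$$
   Context: A ReLU FNN $f:\mathbb{R}^a\to\mathbb{R}^b$ of depth $L$ and width $W$: $f_0=x$, $f_l=\sigma_R(W_lf_{l-1}+b_l)$ for $1\le l\le L-1$, $f=W_Lf_{L-1}+b_L$, with $W_1\in\mathbb{R}^{W\times a}$, $W_l\in\mathbb{R}^{W\times W}$, $W_L\in\mathbb{R}^{b\times W}$, $b_l\in\mathbb{R}^W$, $b_L\in\mathbb{R}^b$, $\sigma_R(x)=\max\{x,0\}$ entrywise. Its weight bound is the maximum absolute value of all entries of the $W_l,b_l$. *)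

theory Defs
  imports Complex_Main
begin

text \<open>Vectors in R^n are represented as functions nat => real, only indices < n matter.
A layer is a pair (weight matrix, bias vector); matrices are nat => nat => real.\<close>

type_synonym layer = "(nat \<Rightarrow> nat \<Rightarrow> real) \<times> (nat \<Rightarrow> real)"

definition affine :: "nat \<Rightarrow> layer \<Rightarrow> (nat \<Rightarrow> real) \<Rightarrow> (nat \<Rightarrow> real)" where
  "affine n l x = (\<lambda>i. (\<Sum>j<n. fst l i j * x j) + snd l i)"

definition relu :: "(nat \<Rightarrow> real) \<Rightarrow> (nat \<Rightarrow> real)" where
  "relu v = (\<lambda>i. max (v i) 0)"

text \<open>Run a network; the first argument lists the input dimension of each layer.
The last layer is affine only, all earlier ones are followed by ReLU.\<close>
fun fnn_run :: "nat list \<Rightarrow> layer list \<Rightarrow> (nat \<Rightarrow> real) \<Rightarrow> (nat \<Rightarrow> real)" where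
  "fnn_run (n # ns) [l] x = affine n l x"
| "fnn_run (n # ns) (l # l' # ls) x = fnn_run ns (l' # ls) (relu (affine n l x))"
| "fnn_run _ _ x = x"

definition is_relu_fnn ::
  "nat \<Rightarrow> nat \<Rightarrow> nat \<Rightarrow> nat \<Rightarrow> real \<Rightarrow> ((nat \<Rightarrow> real) \<Rightarrow> (nat \<Rightarrow> real)) \<Rightarrow> bool" where
  "is_relu_fnn a b L W B F \<longleftrightarrow>
     (\<exists>ls :: layer list.
        let ins = a # replicate (L - 1) W; outs = replicate (L - 1) W @ [b] in
        L \<ge> 1 \<and> length ls = L \<and>
        (\<forall>l<L. \<forall>i<outs ! l. \<bar>snd (ls ! l) i\<bar> \<le> B \<and>
                              (\<forall>j<ins ! l. \<bar>fst (ls ! l) i j\<bar> \<le> B)) \<and>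
        (\<forall>x. \<forall>i<b. F x i = fnn_run ins ls x i))"

definition is_relu_fnn_real :: "nat \<Rightarrow> nat \<Rightarrow> real \<Rightarrow> (real \<Rightarrow> real) \<Rightarrow> bool" where
  "is_relu_fnn_real L W B f \<longleftrightarrow> is_relu_fnn 1 1 L W B (\<lambda>x i. f (x 0))"

end

theory Submission
  imports Defs
begin

(* Step j of the staircase is a ramp of height \<delta>/K rising on [(j+1-\<delta>)/K, (j+1)/K].
   Such a clipped ramp costs two ReLU layers, since
     min (max (x - c) 0) w = w - max (w - max (x - c) 0) 0,
   and the output layer sums the K ramps with weight 1/\<delta>. On [k/K, (k+1)/K] the ramps
   j < k are saturated and, as \<delta> \<le> 1, the ramps j > k have not started yet, so only
   ramp k varies there. *)

lemma is_relu_fnn_real_depth3I: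
  fixes w\<^sub>1 b\<^sub>1 b\<^sub>2 w\<^sub>3 :: "nat \<Rightarrow> real" and W\<^sub>2 :: "nat \<Rightarrow> nat \<Rightarrow> real"
  assumes "\<And>i. i < W \<Longrightarrow> \<bar>w\<^sub>1 i\<bar> \<le> B \<and> \<bar>b\<^sub>1 i\<bar> \<le> B"
    and "\<And>i. i < W \<Longrightarrow> (\<forall>j<W. \<bar>W\<^sub>2 i j\<bar> \<le> B) \<and> \<bar>b\<^sub>2 i\<bar> \<le> B"
    and "\<And>j. j < W \<Longrightarrow> \<bar>w\<^sub>3 j\<bar> \<le> B" and "\<bar>b\<^sub>3\<bar> \<le> B"
    and "\<And>x. f x = (\<Sum>i<W. w\<^sub>3 i * max ((\<Sum>j<W. W\<^sub>2 i j * max (w\<^sub>1 j * x + b\<^sub>1 j) 0) + b\<^sub>2 i) 0) + b\<^sub>3"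
  shows "is_relu_fnn_real 3 W B f"
proof -
  have dims: "replicate (3 - 1) W = [W, W]" by (simp add: numeral_eq_Suc)
  show ?thesis
    unfolding is_relu_fnn_real_def is_relu_fnn_def Let_def dims
    by (intro exI[of _ "[(\<lambda>i _. w\<^sub>1 i, b\<^sub>1), (W\<^sub>2, b\<^sub>2), (\<lambda>_ j. w\<^sub>3 j, \<lambda>_. b\<^sub>3)]"])
      (use assms in \<open>auto simp: less_Suc_eq numeral_eq_Suc affine_def relu_def\<close>)
qed

definition ramp :: "real \<Rightarrow> real \<Rightarrow> real \<Rightarrow> real" where
  "ramp c w x = min (max (x - c) 0) w"

lemma ramp_below: "x \<le> c \<Longrightarrow> 0 \<le> w \<Longrightarrow> ramp c w x = 0"
  by (simp add: ramp_def)

lemma ramp_above: "c + w \<le> x \<Longrightarrow> ramp c w x = w"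
  by (simp add: ramp_def)

lemma ramp_between: "c \<le> x \<Longrightarrow> x \<le> c + w \<Longrightarrow> ramp c w x = x - c"
  by (simp add: ramp_def)

lemma relu_diff_relu_eq_ramp: "0 \<le> w \<Longrightarrow> max (w - max (x - c) 0) 0 = w - ramp c w x"
  by (simp add: ramp_def)

lemma sum_lessThan_saturated:
  fixes g :: "nat \<Rightarrow> 'a::comm_semiring_1"
  assumes "k < n" and "\<And>j. j < k \<Longrightarrow> g j = c" and "\<And>j. k < j \<Longrightarrow> j < n \<Longrightarrow> g j = 0"
  shows "(\<Sum>j<n. g j) = of_nat k * c + g k"
proof -
  have "(\<Sum>j<n. g j) = (\<Sum>j<k. g j) + g k + (\<Sum>j=Suc k..<n. g j)"
    using assms(1) by (metis lessThan_atLeast0 sum.atLeastLessThan_concat sum.lessThan_Suc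
        zero_le Suc_leI less_imp_le_nat)
  also have "(\<Sum>j<k. g j) = of_nat k * c"
    using assms(2) by simp
  also have "(\<Sum>j=Suc k..<n. g j) = 0"
    using assms(3) by simp
  finally show ?thesis by simp
qed

definition staircase :: "nat \<Rightarrow> real \<Rightarrow> real \<Rightarrow> real" where
  "staircase K \<delta> x = (\<Sum>j<K. ramp ((real j + 1 - \<delta>) / K) (\<delta> / K) x) / \<delta>"

lemma staircase_eq:
  fixes K k :: nat and \<delta> x :: real
  assumes "0 < \<delta>" and "\<delta> \<le> 1" and "k < K" and "real k / K \<le> x" and "x \<le> (real k + 1) / K"
  shows "staircase K \<delta> x = (if x < (real k + 1 - \<delta>) / K then real k / K
                           else (real k + 1) / K - (real k + 1 - K * x) / (K * \<delta>))"
proof -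
  define c where "c j = (real j + 1 - \<delta>) / K" for j
  have K: "real K > 0" using assms(3) by simp
  have step_end: "c j + \<delta> / K = (real j + 1) / K" for j
    by (simp add: c_def add_divide_distrib[symmetric])
  have "(\<Sum>j<K. ramp (c j) (\<delta> / K) x) = real k * (\<delta> / K) + ramp (c k) (\<delta> / K) x"
  proof (rule sum_lessThan_saturated[OF \<open>k < K\<close>])
    fix j assume "j < k"
    then have "(real j + 1) / K \<le> real k / K" using K by (simp add: divide_right_mono)
    then show "ramp (c j) (\<delta> / K) x = \<delta> / K"
      using assms(4) step_end[of j] by (intro ramp_above) linarith
  next
    fix j assume "k < j"
    then have "(real k + 1) / K \<le> c j" using K assms(2) by (simp add: c_def divide_right_mono)
    then show "ramp (c j) (\<delta> / K) x = 0"
      using assms(1,5) K by (intro ramp_below) auto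
  qed
  then have "staircase K \<delta> x = real k / K + ramp (c k) (\<delta> / K) x / \<delta>"
    using assms(1) by (simp add: staircase_def c_def add_divide_distrib)
  also have "\<dots> = (if x < c k then real k / K
                   else (real k + 1) / K - (real k + 1 - K * x) / (K * \<delta>))"
  proof (cases "x < c k")
    case True
    then show ?thesis using assms(1) K by (simp add: ramp_below)
  next
    case False
    then have "ramp (c k) (\<delta> / K) x = x - c k"
      using assms(5) step_end by (intro ramp_between) auto
    then have "real k / K + ramp (c k) (\<delta> / K) x / \<delta> = real k / K + (x - c k) / \<delta>"
      by simp
    also have "\<dots> = (real k + 1) / K - (real k + 1 - K * x) / (K * \<delta>)"
      using assms(1) K by (simp add: c_def field_simps)
    finally show ?thesis using False by simp
  qed
  finally show ?thesis by (simp add: c_def)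
qed

lemma staircase_is_relu_fnn_real:
  assumes "K \<ge> 1" and "0 < \<delta>" and "\<delta> \<le> 1"
  shows "is_relu_fnn_real 3 K (1 / \<delta>) (staircase K \<delta>)"
proof -
  define c where "c j = (real j + 1 - \<delta>) / K" for j
  have K: "real K \<ge> 1" using assms(1) by simp
  have one_le: "1 \<le> 1 / \<delta>" using assms(2,3) by simp
  have "\<bar>c j\<bar> \<le> 1 / \<delta>" if "j < K" for j
  proof -
    have "\<bar>c j\<bar> \<le> 1" using that assms(2,3) K by (simp add: c_def abs_le_iff divide_le_eq)
    with one_le show ?thesis by linarith
  qed
  moreover have "\<delta> / K \<le> 1 / \<delta>"
  proof -
    have "\<delta> / K \<le> 1" using assms(3) K by (simp add: divide_le_eq)
    with one_le show ?thesis by linarith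
  qed
  moreover have "staircase K \<delta> x = (\<Sum>i<K. - 1 / \<delta> * max ((\<Sum>j<K. (if i = j then -1 else 0) *
                   max (1 * x + - c j) 0) + \<delta> / K) 0) + 1" for x
  proof -
    have diag: "(\<Sum>j<K. (if i = j then -1 else 0) * v j) = - v i"
      if "i < K" for i and v :: "nat \<Rightarrow> real"
    proof -
      have "(\<Sum>j<K. (if i = j then -1 else 0) * v j) = (\<Sum>j<K. if i = j then - v j else 0)"
        by (rule sum.cong) auto
      then show ?thesis using that by simp
    qed
    have "(\<Sum>i<K. - 1 / \<delta> * max ((\<Sum>j<K. (if i = j then -1 else 0) *
                   max (1 * x + - c j) 0) + \<delta> / K) 0)
        = (\<Sum>i<K. - 1 / \<delta> * (\<delta> / K - ramp (c i) (\<delta> / K) x))"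
      using assms(2) by (intro sum.cong) (simp_all add: diag relu_diff_relu_eq_ramp)
    also have "\<dots> = (\<Sum>i<K. ramp (c i) (\<delta> / K) x / \<delta>) - (\<Sum>i<K. 1 / K)"
      unfolding sum_subtractf[symmetric] using assms(2) by (intro sum.cong) (simp_all add: field_simps)
    also have "\<dots> = staircase K \<delta> x - 1"
      using K by (simp add: staircase_def c_def sum_divide_distrib)
    finally show ?thesis by simp
  qed
  ultimately show ?thesis
    using assms(2,3)
    by (intro is_relu_fnn_real_depth3I[where w\<^sub>1 = "\<lambda>_. 1" and b\<^sub>1 = "\<lambda>j. - c j"
          and W\<^sub>2 = "\<lambda>i j. if i = j then -1 else 0" and b\<^sub>2 = "\<lambda>_. \<delta> / K"
          and w\<^sub>3 = "\<lambda>_. - 1 / \<delta>" and b\<^sub>3 = 1]) auto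
qed

theorem lemma6:
  fixes K :: nat and \<delta> :: real
  assumes "K \<ge> 1" and "\<delta> > 0" and "\<delta> \<le> 1"
  shows "\<exists>f. is_relu_fnn_real 3 K (1 / \<delta>) f \<and>
           (\<forall>k<K. \<forall>x::real. real k / K \<le> x \<and> x \<le> (real k + 1) / K \<longrightarrow>
              f x = (if x < (real k + 1 - \<delta>) / K then real k / K
                     else (real k + 1) / K - (real k + 1 - K * x) / (K * \<delta>)))"
  using staircase_is_relu_fnn_real[OF assms] staircase_eq[OF assms(2,3)] by blast

end
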